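(* Let $\mathcal{G}=(I,E)$ be a simple, undirected, connected graph with finite node set $I$, let $\mathfrak{f}\notin I$ and $I_\mathfrak{f}:=I\cup\{\mathfrak{f}\}$. Let $Q\in\mathbb{R}_+^{I\times I}$ and $\mathbf{q}\in\mathbb{R}_+^{I}$ satisfy: $Q_{ij}=0$ iff $\{i,j\}\notin E$, and $\sum_{j\in I}Q_{ij}+q_i=1$ for every $i\in I$. Assume (i) $\mathbf{q}$ is not identically zero and, for every $\ell\in I$, $Q_{I\setminus\{\ell\},I\setminus\{\ell\}}$ is strictly sub-stochastic; and (ii) there is a symmetric $C\in\mathbb{R}_+^{I_\mathfrak{f}\times I_\mathfrak{f}}$ with $Q_{ij}=C_{ij}/\sum_{k\in I_\mathfrak{f}}C_{ik}$ and $q_i=C_{i\mathfrak{f}}/\sum_{k\in I_\mathfrak{f}}C_{ik}$ for all $i,j\in I$. Consider the following Message Passing Algorithm (MPA). For each ordered pair $(i,j)$ with $\{i,j\}\in E$, node $i$ sends to $j$ messages $W^{i\to j}(t)$ and $H^{i\to j}(t)$, $t=0,1,2,\dots$, with $W^{i\to j}(0)=H^{i\to j}(0)=1$ and, synchronously for all such pairs, $$W^{i\to j}(t+1)=\frac{1}{1+\frac{q_i}{Q_{ij}}+\sum_{k\in N_i\setminus\{j\}}\frac{Q_{ik}}{Q_{ij}}\big(1-W^{k\to i}(t)\big)},\qquad H^{i\to j}(t+1)=1+\sum_{k\in N_i\setminus\{j\}}W^{k\to i}(t)\,H^{k\to i}(t),$$ where $N_i=\{w\in I:\{i,w\}\in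 E\}$. Each node $\ell\in I$ computes $H^\ell(t)=1+\sum_{i\in N_\ell}W^{i\to\ell}(t)\,H^{i\to\ell}(t)$. Then the MPA converges: for every ordered pair $(i,j)$ with $\{i,j\}\in E$ the sequences $W^{i\to j}(t)$ and $H^{i\to j}(t)$ converge as $t\to\infty$, and consequently $H^\ell(t)$ converges for every $\ell\in I$.
   Context: A nonnegative matrix is strictly sub-stochastic if all its row sums are $\le 1$ and at least one is $<1$; $Q_{T,T}$ denotes the principal submatrix indexed by $T$. *)

theory Defs
  imports "HOL-Analysis.Analysis"
begin

definition nbrs :: "'a set \<Rightarrow> ('a \<Rightarrow> 'a \<Rightarrow> bool) \<Rightarrow> 'a \<Rightarrow> 'a set" where
  "nbrs I adj i = {w \<in> I. adj i w}"

definition strictly_substochastic :: "('a \<Rightarrow> 'a \<Rightarrow> real) \<Rightarrow> 'a set \<Rightarrow> bool" where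
  "strictly_substochastic Q T \<longleftrightarrow>
     (\<forall>i\<in>T. \<forall>j\<in>T. Q i j \<ge> 0) \<and>
     (\<forall>i\<in>T. (\<Sum>j\<in>T. Q i j) \<le> 1) \<and> (\<exists>i\<in>T. (\<Sum>j\<in>T. Q i j) < 1)"

text \<open>The message passing algorithm: returns (W(t), H(t)), where W(t) i j = W^{i->j}(t).\<close>
primrec mpa :: "'a set \<Rightarrow> ('a \<Rightarrow> 'a \<Rightarrow> bool) \<Rightarrow> ('a \<Rightarrow> 'a \<Rightarrow> real) \<Rightarrow> ('a \<Rightarrow> real) \<Rightarrow> nat
    \<Rightarrow> ('a \<Rightarrow> 'a \<Rightarrow> real) \<times> ('a \<Rightarrow> 'a \<Rightarrow> real)" where
  "mpa I adj Q q 0 = ((\<lambda>i j. 1), (\<lambda>i j. 1))"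
| "mpa I adj Q q (Suc t) =
     (let W = fst (mpa I adj Q q t); H = snd (mpa I adj Q q t) in
      ((\<lambda>i j. 1 / (1 + q i / Q i j + (\<Sum>k\<in>nbrs I adj i - {j}. Q i k / Q i j * (1 - W k i)))),
       (\<lambda>i j. 1 + (\<Sum>k\<in>nbrs I adj i - {j}. W k i * H k i))))"

definition mpaW where "mpaW I adj Q q t i j = fst (mpa I adj Q q t) i j"
definition mpaH where "mpaH I adj Q q t i j = snd (mpa I adj Q q t) i j"

definition mpa_node_H where
  "mpa_node_H I adj Q q t l = 1 + (\<Sum>i\<in>nbrs I adj l. mpaW I adj Q q t i l * mpaH I adj Q q t i l)"

end

theory Submission imports Defs begin

text \<open>
  With \<open>mu i = \<Sum>\<^sub>k C i k\<close> the chain is reversible, \<open>mu i * Q i k = mu k * Q k i\<close>, and by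
  connectivity and \<open>q \<noteq> 0\<close> a truncated Neumann series gives \<open>phi \<ge> 1\<close> with
  \<open>\<Sum>\<^sub>k Q i k * phi k < phi i\<close>. The \<open>W\<close>-update is \<open>W(t+1) i j = Q i j / D(W(t)) i j\<close> with the
  denominator \<open>D X i j = 1 - (\<Sum>k\<in>N i - {j}. Q i k * X k i)\<close>, a monotone map. Started at 1 it
  decreases to a fixed point \<open>W\<^sup>*\<close>; started at 0 it increases to a fixed point \<open>V\<^sup>* \<le> W\<^sup>*\<close>
  with \<open>V\<^sup>* i j * phi j < phi i\<close>, and a maximal-ratio argument over the edges gives \<open>W\<^sup>* = V\<^sup>*\<close>.
  Hence the edge weights \<open>h t i j = mu i * (D(W(t)) i j * phi i - Q i j * phi j)\<close> become
  positive. By reversibility, \<open>\<Sum>\<^sub>k W(t+1) k i * h t k i = h (t+1) i j - mu i * slack i\<close>, where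
  \<open>slack i = phi i - \<Sum>\<^sub>k Q i k * phi k > 0\<close>, and this is at most \<open>rate * h (t+1) i j\<close> for a
  fixed \<open>rate < 1\<close>. The increments of \<open>H\<close> satisfy the same recursion with \<open>\<le>\<close> and without
  the slack term, so once bounded by a multiple of \<open>h\<close> they decay like \<open>rate\<^sup>t\<close>.
\<close>

lemma convergent_if_increments_le_geometric:
  fixes f :: "nat \<Rightarrow> real"
  assumes incr: "\<And>n. f (Suc n) - f n \<le> c * g ^ n"
    and "0 \<le> c" "0 \<le> g" "g < 1"
    and lower: "\<And>n. b \<le> f n"
  shows "convergent f"
proof -
  define G where "G n = f n + c * g ^ n / (1 - g)" for n
  have "decseq G"
  proof (rule decseq_SucI)
    fix n
    have "c * g ^ Suc n / (1 - g) + c * g ^ n = c * g ^ n / (1 - g)"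
      using \<open>g < 1\<close> by (simp add: field_simps)
    then show "G (Suc n) \<le> G n" using incr[of n] unfolding G_def by linarith
  qed
  moreover have "\<forall>n. b \<le> G n"
    using lower \<open>0 \<le> c\<close> \<open>0 \<le> g\<close> \<open>g < 1\<close> by (auto simp: G_def intro: add_increasing2)
  ultimately obtain L where "G \<longlonglongrightarrow> L" using decseq_convergent by blast
  then have "(\<lambda>n. G n - c / (1 - g) * g ^ n) \<longlonglongrightarrow> L - c / (1 - g) * 0"
    using assms by (intro tendsto_intros LIMSEQ_power_zero) auto
  moreover have "(\<lambda>n. G n - c / (1 - g) * g ^ n) = f"
    by (simp add: G_def fun_eq_iff)
  ultimately show ?thesis by (auto simp: convergent_def)
qed

section \<open>A strictly superharmonic function\<close>

fun Q_power_ones :: "'a set \<Rightarrow> ('a \<Rightarrow> 'a \<Rightarrow> real) \<Rightarrow> nat \<Rightarrow> 'a \<Rightarrow> real" where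
  "Q_power_ones I Q 0 i = 1"
| "Q_power_ones I Q (Suc n) i = (\<Sum>k\<in>I. Q i k * Q_power_ones I Q n k)"

context
  fixes I :: "'a set" and adj :: "'a \<Rightarrow> 'a \<Rightarrow> bool" and Q :: "'a \<Rightarrow> 'a \<Rightarrow> real" and q :: "'a \<Rightarrow> real"
  assumes finite_I: "finite I"
    and adj_in: "\<And>i j. adj i j \<Longrightarrow> i \<in> I \<and> j \<in> I"
    and Q_nonneg: "\<And>i j. i \<in> I \<Longrightarrow> j \<in> I \<Longrightarrow> 0 \<le> Q i j"
    and Q_pos: "\<And>i j. adj i j \<Longrightarrow> 0 < Q i j"
    and q_nonneg: "\<And>i. i \<in> I \<Longrightarrow> 0 \<le> q i"
    and row_sum: "\<And>i. i \<in> I \<Longrightarrow> (\<Sum>j\<in>I. Q i j) + q i = 1"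
begin

lemma Q_power_ones_bounds: "i \<in> I \<Longrightarrow> 0 \<le> Q_power_ones I Q n i \<and> Q_power_ones I Q n i \<le> 1"
proof (induction n arbitrary: i)
  case (Suc n)
  have "(\<Sum>k\<in>I. Q i k * Q_power_ones I Q n k) \<le> (\<Sum>k\<in>I. Q i k)"
    by (rule sum_mono) (use Suc Q_nonneg in \<open>auto intro: mult_left_le\<close>)
  moreover have "0 \<le> (\<Sum>k\<in>I. Q i k * Q_power_ones I Q n k)"
    by (rule sum_nonneg) (use Suc Q_nonneg in auto)
  ultimately show ?case using row_sum[OF Suc.prems] q_nonneg[OF Suc.prems] by simp
qed simp

lemma Q_power_ones_less_1:
  assumes "(adj ^^ n) i p" "i \<in> I" "p \<in> I" "q p \<noteq> 0" "n < m"
  shows "Q_power_ones I Q m i < 1"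
  using assms
proof (induction n arbitrary: i m)
  case 0
  then obtain m' where m: "m = Suc m'" by (cases m) auto
  have "(\<Sum>k\<in>I. Q i k * Q_power_ones I Q m' k) \<le> (\<Sum>k\<in>I. Q i k)"
    by (rule sum_mono) (use Q_power_ones_bounds Q_nonneg 0 in \<open>auto intro: mult_left_le\<close>)
  moreover have "0 < q i" using q_nonneg[OF \<open>i \<in> I\<close>] 0 by auto
  ultimately show ?case using row_sum[OF \<open>i \<in> I\<close>] m by simp
next
  case (Suc n)
  then obtain m' where m: "m = Suc m'" "n < m'" by (cases m) auto
  obtain y where y: "adj i y" "(adj ^^ n) y p" using Suc.prems(1) by (rule relpowp_Suc_E2)
  have yI: "y \<in> I" using adj_in y(1) by auto
  let ?R = "\<lambda>k. Q i k * (1 - Q_power_ones I Q m' k)"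
  have "?R y \<le> (\<Sum>k\<in>I. ?R k)"
    by (rule member_le_sum) (use yI finite_I Q_power_ones_bounds Q_nonneg Suc.prems(2) in auto)
  moreover have "0 < ?R y" using Q_pos[OF y(1)] Suc.IH[OF y(2) yI Suc.prems(3,4) m(2)] by simp
  moreover have "(\<Sum>k\<in>I. ?R k) = (\<Sum>k\<in>I. Q i k) - (\<Sum>k\<in>I. Q i k * Q_power_ones I Q m' k)"
    by (simp add: right_diff_distrib sum_subtractf)
  ultimately show ?case using row_sum[OF Suc.prems(2)] q_nonneg[OF Suc.prems(2)] m by simp
qed

lemma exists_strictly_superharmonic:
  assumes connected: "\<forall>i\<in>I. \<forall>j\<in>I. adj\<^sup>*\<^sup>* i j" and leak: "\<exists>p\<in>I. q p \<noteq> 0"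
  shows "\<exists>phi. \<forall>i\<in>I. 1 \<le> phi i \<and> (\<Sum>k\<in>I. Q i k * phi k) < phi i"
proof -
  let ?P = "Q_power_ones I Q"
  obtain p where p: "p \<in> I" "q p \<noteq> 0" using leak by blast
  have "\<exists>n. (adj ^^ n) i p" if "i \<in> I" for i
    using connected that p(1) by (auto simp: rtranclp_power)
  then obtain len where len: "\<And>i. i \<in> I \<Longrightarrow> (adj ^^ len i) i p" by metis
  define N where "N = Suc (\<Sum>i\<in>I. len i)"
  have P_N: "?P N i < 1" if "i \<in> I" for i
  proof (rule Q_power_ones_less_1[OF len[OF that] that p])
    show "len i < N" using member_le_sum[of i I len] finite_I that by (simp add: N_def)
  qed
  define phi where "phi i = (\<Sum>n<N. ?P n i)" for i
  show ?thesis
  proof (intro exI ballI conjI)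
    fix i assume i: "i \<in> I"
    have "?P 0 i \<le> phi i" unfolding phi_def
      by (rule member_le_sum[where f = "\<lambda>n. ?P n i"]) (use Q_power_ones_bounds i N_def in auto)
    then show "1 \<le> phi i" by simp
    have "(\<Sum>k\<in>I. Q i k * phi k) = (\<Sum>n<N. ?P (Suc n) i)"
      unfolding phi_def by (simp add: sum_distrib_left sum.swap[of _ I])
    also have "\<dots> = phi i - (?P 0 i - ?P N i)"
      unfolding phi_def using sum_lessThan_telescope[of "\<lambda>n. ?P n i" N] by (simp add: sum_subtractf)
    also have "\<dots> < phi i" using P_N[OF i] by simp
    finally show "(\<Sum>k\<in>I. Q i k * phi k) < phi i" .
  qed
qed

end

section \<open>The message passing algorithm on a reversible chain\<close>

locale mpa_reversible =
  fixes I :: "'a set" and adj :: "'a \<Rightarrow> 'a \<Rightarrow> bool" and Q :: "'a \<Rightarrow> 'a \<Rightarrow> real"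
    and q :: "'a \<Rightarrow> real" and mu :: "'a \<Rightarrow> real" and phi :: "'a \<Rightarrow> real"
  assumes finite_I: "finite I"
    and adj_in: "\<And>i j. adj i j \<Longrightarrow> i \<in> I \<and> j \<in> I"
    and adj_sym: "\<And>i j. adj i j \<Longrightarrow> adj j i"
    and Q_nonneg: "\<And>i j. i \<in> I \<Longrightarrow> j \<in> I \<Longrightarrow> 0 \<le> Q i j"
    and q_nonneg: "\<And>i. i \<in> I \<Longrightarrow> 0 \<le> q i"
    and Q_eq_0_iff: "\<And>i j. i \<in> I \<Longrightarrow> j \<in> I \<Longrightarrow> Q i j = 0 \<longleftrightarrow> \<not> adj i j"
    and row_sum: "\<And>i. i \<in> I \<Longrightarrow> (\<Sum>j\<in>I. Q i j) + q i = 1"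
    and mu_pos: "\<And>i. i \<in> I \<Longrightarrow> 0 < mu i"
    and detailed_balance: "\<And>i k. i \<in> I \<Longrightarrow> k \<in> I \<Longrightarrow> mu i * Q i k = mu k * Q k i"
    and phi_ge_1: "\<And>i. i \<in> I \<Longrightarrow> 1 \<le> phi i"
    and phi_superharmonic: "\<And>i. i \<in> I \<Longrightarrow> (\<Sum>k\<in>I. Q i k * phi k) < phi i"
begin

abbreviation "N i \<equiv> nbrs I adj i"
abbreviation "W t \<equiv> mpaW I adj Q q t"
abbreviation "H t \<equiv> mpaH I adj Q q t"

definition denom :: "('a \<Rightarrow> 'a \<Rightarrow> real) \<Rightarrow> 'a \<Rightarrow> 'a \<Rightarrow> real" where
  "denom X i j = 1 - (\<Sum>k\<in>N i - {j}. Q i k * X k i)"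

definition slack :: "'a \<Rightarrow> real" where
  "slack i = phi i - (\<Sum>k\<in>I. Q i k * phi k)"

lemma slack_pos: "i \<in> I \<Longrightarrow> 0 < slack i"
  using phi_superharmonic[of i] by (simp add: slack_def)

lemma nbrs_iff: "k \<in> N i \<longleftrightarrow> adj i k"
  using adj_in by (auto simp: nbrs_def)

lemma in_nbrs_minus_adj: "k \<in> N i - {j} \<Longrightarrow> adj k i \<and> k \<in> I"
  using adj_in adj_sym by (auto simp: nbrs_def)

lemma finite_nbrs: "finite (N i)"
  using finite_I by (simp add: nbrs_def)

lemma Q_pos: "adj i j \<Longrightarrow> 0 < Q i j"
  using Q_nonneg[of i j] Q_eq_0_iff[of i j] adj_in[of i j] by force

lemma sum_row_split:
  assumes "adj i j"
  shows "(\<Sum>k\<in>I. Q i k * f k) = Q i j * f j + (\<Sum>k\<in>N i - {j}. Q i k * f k)"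
proof -
  have i: "i \<in> I" using adj_in assms by blast
  have "(\<Sum>k\<in>I. Q i k * f k) = (\<Sum>k\<in>N i. Q i k * f k)"
    by (rule sum.mono_neutral_right[OF finite_I]) (auto simp: nbrs_def Q_eq_0_iff[OF i])
  also have "\<dots> = Q i j * f j + (\<Sum>k\<in>N i - {j}. Q i k * f k)"
    using assms finite_nbrs by (intro sum.remove) (auto simp: nbrs_iff)
  finally show ?thesis .
qed

lemma row_sum_nbrs: "adj i j \<Longrightarrow> Q i j + q i + (\<Sum>k\<in>N i - {j}. Q i k) = 1"
  using sum_row_split[of i j "\<lambda>_. 1"] row_sum[of i] adj_in[of i j] by simp

lemma W_0: "W 0 i j = 1"
  by (simp add: mpaW_def)

lemma W_Suc:
  assumes "adj i j"
  shows "W (Suc t) i j = Q i j / denom (W t) i j"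
proof -
  have Q: "0 < Q i j" using Q_pos assms .
  let ?S1 = "\<Sum>k\<in>N i - {j}. Q i k" and ?S2 = "\<Sum>k\<in>N i - {j}. Q i k * W t k i"
  have "(\<Sum>k\<in>N i - {j}. Q i k / Q i j * (1 - W t k i))
      = (\<Sum>k\<in>N i - {j}. (Q i k - Q i k * W t k i) / Q i j)"
    by (rule sum.cong) (simp_all add: algebra_simps diff_divide_distrib)
  also have "\<dots> = (?S1 - ?S2) / Q i j"
    by (simp only: sum_divide_distrib[symmetric] sum_subtractf)
  finally have "W (Suc t) i j = 1 / (1 + q i / Q i j + (?S1 - ?S2) / Q i j)"
    by (simp add: mpaW_def Let_def)
  also have "\<dots> = 1 / ((Q i j + q i + ?S1 - ?S2) / Q i j)"
    using Q by (simp add: add_divide_distrib diff_divide_distrib)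
  also have "\<dots> = Q i j / (1 - ?S2)"
    using row_sum_nbrs[OF assms] by simp
  finally show ?thesis by (simp add: denom_def)
qed

lemma H_0: "H 0 i j = 1"
  by (simp add: mpaH_def)

lemma H_Suc: "H (Suc t) i j = 1 + (\<Sum>k\<in>N i - {j}. W t k i * H t k i)"
  by (simp add: mpaH_def mpaW_def Let_def)

lemma denom_bounds:
  assumes "adj i j" and "\<And>k. adj k i \<Longrightarrow> 0 \<le> X k i \<and> X k i \<le> 1"
  shows "Q i j \<le> denom X i j" "denom X i j \<le> 1"
proof -
  have i: "i \<in> I" using adj_in assms(1) by blast
  have "(\<Sum>k\<in>N i - {j}. Q i k * X k i) \<le> (\<Sum>k\<in>N i - {j}. Q i k)"
    by (rule sum_mono) (use assms(2) in_nbrs_minus_adj Q_nonneg i in \<open>auto intro: mult_left_le\<close>)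
  then show "Q i j \<le> denom X i j"
    using row_sum_nbrs[OF assms(1)] q_nonneg[OF i] by (simp add: denom_def)
  have "0 \<le> (\<Sum>k\<in>N i - {j}. Q i k * X k i)"
    by (rule sum_nonneg) (use assms(2) in_nbrs_minus_adj Q_nonneg i in auto)
  then show "denom X i j \<le> 1" by (simp add: denom_def)
qed

lemma denom_antimono:
  assumes "\<And>k. adj k i \<Longrightarrow> X k i \<le> Y k i" and "i \<in> I"
  shows "denom Y i j \<le> denom X i j"
proof -
  have "(\<Sum>k\<in>N i - {j}. Q i k * X k i) \<le> (\<Sum>k\<in>N i - {j}. Q i k * Y k i)"
    by (rule sum_mono) (use assms in_nbrs_minus_adj Q_nonneg in \<open>auto intro: mult_left_mono\<close>)
  then show ?thesis by (simp add: denom_def)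
qed

lemma tendsto_denom:
  assumes "\<And>k. adj k i \<Longrightarrow> (\<lambda>t. X t k i) \<longlonglongrightarrow> Y k i"
  shows "(\<lambda>t. denom (X t) i j) \<longlonglongrightarrow> denom Y i j"
  unfolding denom_def by (intro tendsto_intros) (use assms in_nbrs_minus_adj in blast)

lemma denom_ge_phi_ratio:
  assumes "adj i j" and X: "\<And>k. adj k i \<Longrightarrow> 0 \<le> X k i \<and> X k i * phi i \<le> phi k"
  shows "(slack i + Q i j * phi j) / phi i \<le> denom X i j"
proof -
  have i: "i \<in> I" using adj_in assms(1) by auto
  have p: "0 < phi i" using phi_ge_1[OF i] by simp
  have "(\<Sum>k\<in>N i - {j}. Q i k * X k i) \<le> (\<Sum>k\<in>N i - {j}. Q i k * phi k / phi i)"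
  proof (rule sum_mono)
    fix k assume "k \<in> N i - {j}"
    then have k: "adj k i" "k \<in> I" using in_nbrs_minus_adj by auto
    have "X k i \<le> phi k / phi i" using X[OF k(1)] p by (simp add: le_divide_eq)
    then show "Q i k * X k i \<le> Q i k * phi k / phi i"
      using Q_nonneg[OF i k(2)] by (metis mult_left_mono times_divide_eq_right)
  qed
  also have "\<dots> = (phi i - slack i - Q i j * phi j) / phi i"
    using sum_row_split[OF assms(1), of phi] by (simp add: slack_def sum_divide_distrib[symmetric])
  also have "\<dots> = 1 - (slack i + Q i j * phi j) / phi i"
    using p by (simp add: field_simps)
  finally show ?thesis unfolding denom_def by linarith
qed

lemma phi_ratio_pos: "adj i j \<Longrightarrow> 0 < (slack i + Q i j * phi j) / phi i"
  using adj_in[of i j] slack_pos[of i] Q_nonneg[of i j] phi_ge_1[of i] phi_ge_1[of j]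
  by (intro divide_pos_pos add_pos_nonneg mult_nonneg_nonneg) auto

subsection \<open>The decreasing iteration \<open>W\<close>\<close>

lemma W_bounds: "adj i j \<Longrightarrow> 0 < W t i j \<and> W t i j \<le> 1"
proof (induction t arbitrary: i j)
  case (Suc t)
  have "Q i j \<le> denom (W t) i j" by (rule denom_bounds(1)[OF Suc.prems]) (use Suc.IH in force)
  then show ?case using Q_pos[OF Suc.prems] W_Suc[OF Suc.prems] by (simp add: divide_le_eq_1)
qed (simp add: W_0)

lemma denom_W_pos: "adj i j \<Longrightarrow> 0 < denom (W t) i j"
  using denom_bounds(1)[of i j "W t"] W_bounds Q_pos by (meson less_imp_le order.strict_trans2)

lemma W_Suc_le: "adj i j \<Longrightarrow> W (Suc t) i j \<le> W t i j"
proof (induction t arbitrary: i j)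
  case 0 then show ?case using W_bounds[OF 0] by (simp add: W_0)
next
  case (Suc t)
  have "denom (W t) i j \<le> denom (W (Suc t)) i j"
    using denom_antimono Suc adj_in by blast
  then show ?case using Q_pos[OF Suc.prems] denom_W_pos[OF Suc.prems, of t]
    by (simp add: W_Suc[OF Suc.prems] frac_le)
qed

definition "W_lim i j = lim (\<lambda>t. W t i j)"

lemma W_lim:
  assumes "adj i j"
  shows "(\<lambda>t. W t i j) \<longlonglongrightarrow> W_lim i j" "\<And>t. W_lim i j \<le> W t i j"
proof -
  have "decseq (\<lambda>t. W t i j)" by (rule decseq_SucI) (rule W_Suc_le[OF assms])
  then obtain L where L: "(\<lambda>t. W t i j) \<longlonglongrightarrow> L" "\<forall>t. L \<le> W t i j"
    using decseq_convergent[of _ 0] W_bounds[OF assms] by (metis less_imp_le)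
  moreover have "W_lim i j = L" unfolding W_lim_def using L(1) by (rule limI)
  ultimately show "(\<lambda>t. W t i j) \<longlonglongrightarrow> W_lim i j" "\<And>t. W_lim i j \<le> W t i j" by auto
qed

lemma W_lim_bounds: "adj i j \<Longrightarrow> 0 \<le> W_lim i j \<and> W_lim i j \<le> 1"
proof
  assume ij: "adj i j"
  show "0 \<le> W_lim i j"
    using W_lim(1)[OF ij] by (rule LIMSEQ_le_const) (use W_bounds[OF ij] less_imp_le in blast)
  show "W_lim i j \<le> 1" using W_lim(2)[OF ij, of 0] by (simp add: W_0)
qed

lemma W_lim_fixpoint:
  assumes "adj i j"
  shows "Q i j \<le> denom W_lim i j" "W_lim i j = Q i j / denom W_lim i j"
proof -
  show q: "Q i j \<le> denom W_lim i j"
    by (rule denom_bounds(1)[OF assms]) (use W_lim_bounds in blast)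
  have "(\<lambda>t. W (Suc t) i j) \<longlonglongrightarrow> Q i j / denom W_lim i j"
    unfolding W_Suc[OF assms]
    by (intro tendsto_intros tendsto_denom) (use W_lim(1) Q_pos[OF assms] q in auto)
  then show "W_lim i j = Q i j / denom W_lim i j"
    using LIMSEQ_Suc[OF W_lim(1)[OF assms]] LIMSEQ_unique by blast
qed

subsection \<open>The increasing iteration \<open>V\<close> and uniqueness of the fixed point\<close>

primrec V :: "nat \<Rightarrow> 'a \<Rightarrow> 'a \<Rightarrow> real" where
  "V 0 = (\<lambda>i j. 0)"
| "V (Suc t) = (\<lambda>i j. Q i j / denom (V t) i j)"

lemma V_bounds: "adj i j \<Longrightarrow> 0 \<le> V t i j \<and> V t i j * phi j \<le> phi i"
proof (induction t arbitrary: i j)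
  case 0 then show ?case using phi_ge_1 adj_in by force
next
  case (Suc t)
  have i: "i \<in> I" and j: "j \<in> I" using adj_in Suc.prems by auto
  let ?r = "(slack i + Q i j * phi j) / phi i"
  have d: "?r \<le> denom (V t) i j" by (rule denom_ge_phi_ratio[OF Suc.prems]) (use Suc.IH in blast)
  have r: "0 < ?r" using phi_ratio_pos[OF Suc.prems] .
  have Q: "0 < Q i j" using Q_pos[OF Suc.prems] .
  have p: "0 < phi i" "0 < phi j" using phi_ge_1[OF i] phi_ge_1[OF j] by auto
  have "V (Suc t) i j * phi j = Q i j * phi j / denom (V t) i j" by simp
  also have "\<dots> \<le> Q i j * phi j / ?r"
    using d r Q p mult_pos_pos[OF order.strict_trans2[OF r d] r] by (intro divide_left_mono) auto
  also have "\<dots> = phi i * (Q i j * phi j / (slack i + Q i j * phi j))" using p by simp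
  also have "\<dots> \<le> phi i * 1"
    using p slack_pos[OF i] Q by (intro mult_left_mono) (auto simp: divide_le_eq_1 intro!: add_pos_pos)
  finally show ?case using d r Q by simp
qed

lemma denom_V_ge: "adj i j \<Longrightarrow> (slack i + Q i j * phi j) / phi i \<le> denom (V t) i j"
  by (rule denom_ge_phi_ratio) (use V_bounds in auto)

lemma denom_V_pos: "adj i j \<Longrightarrow> 0 < denom (V t) i j"
  using denom_V_ge phi_ratio_pos by (meson order.strict_trans2)

lemma V_le_Suc: "adj i j \<Longrightarrow> V t i j \<le> V (Suc t) i j"
proof (induction t arbitrary: i j)
  case 0 then show ?case using V_bounds[OF 0, of "Suc 0"] by simp
next
  case (Suc t)
  have "denom (V (Suc t)) i j \<le> denom (V t) i j"
    using denom_antimono Suc adj_in by blast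
  then have "Q i j / denom (V t) i j \<le> Q i j / denom (V (Suc t)) i j"
    using Q_pos[OF Suc.prems] denom_V_pos[OF Suc.prems, of "Suc t"] by (intro frac_le) auto
  then show ?case by (simp only: V.simps(2))
qed

lemma V_le_W: "adj i j \<Longrightarrow> V t i j \<le> W t i j"
proof (induction t arbitrary: i j)
  case 0 then show ?case by (simp add: W_0)
next
  case (Suc t)
  have "denom (W t) i j \<le> denom (V t) i j"
    using denom_antimono Suc adj_in by blast
  then show ?case using Q_pos[OF Suc.prems] denom_W_pos[OF Suc.prems, of t]
    by (simp add: W_Suc[OF Suc.prems] frac_le)
qed

definition "V_lim i j = lim (\<lambda>t. V t i j)"

lemma V_lim: "adj i j \<Longrightarrow> (\<lambda>t. V t i j) \<longlonglongrightarrow> V_lim i j"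
proof -
  assume ij: "adj i j"
  have "incseq (\<lambda>t. V t i j)" by (rule incseq_SucI) (rule V_le_Suc[OF ij])
  then obtain L where L: "(\<lambda>t. V t i j) \<longlonglongrightarrow> L"
    using incseq_convergent[of _ 1] V_le_W[OF ij] W_bounds[OF ij] by (meson order.trans)
  moreover have "V_lim i j = L" unfolding V_lim_def using L by (rule limI)
  ultimately show ?thesis by simp
qed

lemma V_lim_bounds:
  assumes "adj i j"
  shows "0 \<le> V_lim i j" "V_lim i j * phi j \<le> phi i" "V_lim i j \<le> W_lim i j"
proof -
  show "0 \<le> V_lim i j"
    using V_lim[OF assms] by (rule LIMSEQ_le_const) (use V_bounds[OF assms] in blast)
  have "(\<lambda>t. V t i j * phi j) \<longlonglongrightarrow> V_lim i j * phi j"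
    using V_lim[OF assms] by (intro tendsto_intros)
  then show "V_lim i j * phi j \<le> phi i"
    by (rule LIMSEQ_le_const2) (use V_bounds[OF assms] in blast)
  show "V_lim i j \<le> W_lim i j"
    using V_lim[OF assms] W_lim(1)[OF assms] by (rule LIMSEQ_le) (use V_le_W[OF assms] in blast)
qed

lemma V_lim_fixpoint:
  assumes "adj i j"
  shows "(slack i + Q i j * phi j) / phi i \<le> denom V_lim i j" "V_lim i j = Q i j / denom V_lim i j"
proof -
  show r: "(slack i + Q i j * phi j) / phi i \<le> denom V_lim i j"
    by (rule denom_ge_phi_ratio[OF assms]) (use V_lim_bounds in blast)
  have "(\<lambda>t. V (Suc t) i j) \<longlonglongrightarrow> Q i j / denom V_lim i j"
    unfolding V.simps(2)
    by (intro tendsto_intros tendsto_denom) (use V_lim phi_ratio_pos[OF assms] r in auto)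
  then show "V_lim i j = Q i j / denom V_lim i j"
    using LIMSEQ_Suc[OF V_lim[OF assms]] LIMSEQ_unique by blast
qed

lemma denom_V_lim_pos: "adj i j \<Longrightarrow> 0 < denom V_lim i j"
  using V_lim_fixpoint(1) phi_ratio_pos by (meson order.strict_trans2)

lemma denom_W_lim_pos: "adj i j \<Longrightarrow> 0 < denom W_lim i j"
  using W_lim_fixpoint(1) Q_pos by (meson order.strict_trans2)

lemma V_lim_mult_denom: "adj i j \<Longrightarrow> V_lim i j * denom V_lim i j = Q i j"
  using V_lim_fixpoint(2) denom_V_lim_pos by (metis nonzero_eq_divide_eq order_less_irrefl)

lemma W_lim_mult_denom: "adj i j \<Longrightarrow> W_lim i j * denom W_lim i j = Q i j"
  using W_lim_fixpoint(2) denom_W_lim_pos by (metis nonzero_eq_divide_eq order_less_irrefl)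

lemma sum_nbrs_defect:
  assumes "adj i j"
  shows "(\<Sum>k\<in>N i - {j}. Q i k * (phi k - X k i * phi i))
       = phi i * denom X i j - Q i j * phi j - slack i"
proof -
  have "(\<Sum>k\<in>N i - {j}. Q i k * (phi k - X k i * phi i))
      = (\<Sum>k\<in>N i - {j}. Q i k * phi k) - phi i * (\<Sum>k\<in>N i - {j}. Q i k * X k i)"
    by (simp add: algebra_simps sum_subtractf sum_distrib_left)
  also have "(\<Sum>k\<in>N i - {j}. Q i k * phi k) = phi i - slack i - Q i j * phi j"
    using sum_row_split[OF assms, of phi] by (simp add: slack_def)
  finally show ?thesis unfolding denom_def by (simp add: algebra_simps)
qed

lemma defect_identity:
  assumes "adj i j" and "X i j * denom X i j = Q i j"
  shows "denom X i j * (phi i - X i j * phi j)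
       = slack i + (\<Sum>k\<in>N i - {j}. Q i k * (phi k - X k i * phi i))"
  unfolding sum_nbrs_defect[OF assms(1)] using assms(2) by (simp add: algebra_simps)

lemma V_lim_defect_pos:
  assumes "adj i j"
  shows "0 < phi i - V_lim i j * phi j"
proof -
  have i: "i \<in> I" using adj_in assms by auto
  have "0 \<le> (\<Sum>k\<in>N i - {j}. Q i k * (phi k - V_lim k i * phi i))"
    by (rule sum_nonneg) (metis in_nbrs_minus_adj V_lim_bounds(2) Q_nonneg i diff_ge_0_iff_ge mult_nonneg_nonneg)
  then have "0 < denom V_lim i j * (phi i - V_lim i j * phi j)"
    using defect_identity[OF assms V_lim_mult_denom[OF assms]] slack_pos[OF i] by linarith
  then show ?thesis using denom_V_lim_pos[OF assms] by (simp add: zero_less_mult_iff)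
qed

text \<open>The gap \<open>W\<^sup>* - V\<^sup>*\<close> satisfies the recursion of the defect \<open>phi i - V\<^sup>* i j * phi j\<close>
  without its positive term \<open>slack\<close>, so a bound by the defect improves to a strict one.\<close>

lemma lim_gap_less:
  assumes ab: "adj a b" and "0 < c"
    and bound: "\<And>x y. adj x y \<Longrightarrow> W_lim x y - V_lim x y \<le> c * (phi x - V_lim x y * phi y)"
  shows "W_lim a b - V_lim a b < c * (phi a - V_lim a b * phi b)"
proof -
  have a: "a \<in> I" using adj_in ab by auto
  let ?DW = "denom W_lim a b" and ?DV = "denom V_lim a b"
  have DV: "0 < ?DV" and DW: "0 < ?DW" using denom_V_lim_pos[OF ab] denom_W_lim_pos[OF ab] .
  have diff: "?DV - ?DW = (\<Sum>k\<in>N a - {b}. Q a k * (W_lim k a - V_lim k a))"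
    unfolding denom_def by (simp add: sum_subtractf[symmetric] right_diff_distrib)
  have "0 \<le> ?DV - ?DW" unfolding diff
    by (rule sum_nonneg) (metis in_nbrs_minus_adj V_lim_bounds(3) Q_nonneg a diff_ge_0_iff_ge mult_nonneg_nonneg)
  have "?DV - ?DW \<le> (\<Sum>k\<in>N a - {b}. Q a k * (c * (phi k - V_lim k a * phi a)))"
    unfolding diff by (rule sum_mono) (metis in_nbrs_minus_adj bound Q_nonneg a mult_left_mono)
  also have "\<dots> = c * (?DV * (phi a - V_lim a b * phi b) - slack a)"
    using defect_identity[OF ab V_lim_mult_denom[OF ab]] by (simp add: sum_distrib_left ac_simps)
  finally have sD: "?DV - ?DW \<le> c * (?DV * (phi a - V_lim a b * phi b) - slack a)" .
  have "W_lim a b - V_lim a b = W_lim a b * (?DV - ?DW) / ?DV"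
    using W_lim_fixpoint(2)[OF ab] V_lim_fixpoint(2)[OF ab] DV DW by (simp add: field_simps)
  also have "\<dots> \<le> (?DV - ?DW) / ?DV"
    using W_lim_bounds[OF ab] \<open>0 \<le> ?DV - ?DW\<close> DV by (simp add: divide_right_mono mult_left_le_one_le)
  also have "\<dots> \<le> c * (?DV * (phi a - V_lim a b * phi b) - slack a) / ?DV"
    using sD DV by (simp add: divide_right_mono)
  also have "\<dots> = c * (phi a - V_lim a b * phi b) - c * slack a / ?DV"
    using DV by (simp add: field_simps)
  also have "\<dots> < c * (phi a - V_lim a b * phi b)"
    using \<open>0 < c\<close> slack_pos[OF a] DV by simp
  finally show ?thesis .
qed

lemma finite_edges: "finite {(a, b). adj a b}"
  by (rule finite_subset[of _ "I \<times> I"]) (use adj_in finite_I in auto)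

lemma W_lim_eq_V_lim:
  assumes "adj i j"
  shows "W_lim i j = V_lim i j"
proof (rule ccontr)
  assume ne: "W_lim i j \<noteq> V_lim i j"
  define E where "E = {(a, b). adj a b}"
  define ratio where "ratio e = (W_lim (fst e) (snd e) - V_lim (fst e) (snd e))
                                 / (phi (fst e) - V_lim (fst e) (snd e) * phi (snd e))" for e
  define c where "c = Max (ratio ` E)"
  have ij: "(i, j) \<in> E" using assms by (simp add: E_def)
  have le_c: "ratio e \<le> c" if "e \<in> E" for e
    unfolding c_def using finite_edges that by (auto simp: E_def)
  have "0 < ratio (i, j)"
    using V_lim_bounds(3)[OF assms] ne V_lim_defect_pos[OF assms] by (simp add: ratio_def)
  then have "0 < c" using le_c[OF ij] by linarith
  moreover have "c \<in> ratio ` E" unfolding c_def using finite_edges ij by (intro Max_in) (auto simp: E_def)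
  then obtain a b where ab: "adj a b" "ratio (a, b) = c" by (auto simp: E_def)
  moreover have "W_lim x y - V_lim x y \<le> c * (phi x - V_lim x y * phi y)" if "adj x y" for x y
    using le_c[of "(x, y)"] that V_lim_defect_pos[OF that] by (simp add: E_def ratio_def divide_le_eq)
  ultimately have "W_lim a b - V_lim a b < c * (phi a - V_lim a b * phi b)"
    using lim_gap_less by blast
  then show False
    using ab(2) V_lim_defect_pos[OF ab(1)] by (simp add: ratio_def field_simps)
qed

subsection \<open>Geometric decay of the increments of \<open>H\<close>\<close>

definition weight :: "nat \<Rightarrow> 'a \<Rightarrow> 'a \<Rightarrow> real" where
  "weight t i j = mu i * (denom (W t) i j * phi i - Q i j * phi j)"

lemma weight_Suc:
  assumes "adj i j"
  shows "weight (Suc t) i j = mu i * slack i + (\<Sum>k\<in>N i - {j}. W (Suc t) k i * weight t k i)"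
proof -
  have i: "i \<in> I" using adj_in assms by auto
  have "(\<Sum>k\<in>N i - {j}. W (Suc t) k i * weight t k i)
      = (\<Sum>k\<in>N i - {j}. mu i * (Q i k * (phi k - W (Suc t) k i * phi i)))"
  proof (rule sum.cong)
    fix k assume "k \<in> N i - {j}"
    then have k: "adj k i" "k \<in> I" using in_nbrs_minus_adj by auto
    have "W (Suc t) k i * denom (W t) k i = Q k i"
      using W_Suc[OF k(1), of t] denom_W_pos[OF k(1), of t] by simp
    then have "W (Suc t) k i * weight t k i = mu k * Q k i * (phi k - W (Suc t) k i * phi i)"
      unfolding weight_def by (simp add: algebra_simps)
    then show "W (Suc t) k i * weight t k i = mu i * (Q i k * (phi k - W (Suc t) k i * phi i))"
      using detailed_balance[OF i k(2)] by simp
  qed simp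
  also have "\<dots> = mu i * (phi i * denom (W (Suc t)) i j - Q i j * phi j - slack i)"
    by (simp add: sum_distrib_left[symmetric] sum_nbrs_defect[OF assms])
  finally show ?thesis unfolding weight_def by (simp add: algebra_simps)
qed

lemma weight_le: "adj i j \<Longrightarrow> weight t i j \<le> mu i * phi i"
proof -
  assume ij: "adj i j"
  have i: "i \<in> I" and j: "j \<in> I" using adj_in ij by auto
  have "denom (W t) i j \<le> 1" by (rule denom_bounds(2)[OF ij]) (metis W_bounds less_imp_le)
  then have "denom (W t) i j * phi i \<le> phi i"
    using denom_W_pos[OF ij, of t] phi_ge_1[OF i] by (intro mult_left_le_one_le) auto
  moreover have "0 \<le> Q i j * phi j" using phi_ge_1[OF j] Q_nonneg[OF i j] by simp
  ultimately show ?thesis unfolding weight_def using mu_pos[OF i] by simp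
qed

lemma weight_eventually_pos: "\<exists>t0. \<forall>i j. adj i j \<longrightarrow> 0 < weight t0 i j"
proof -
  have "\<forall>e\<in>{(a, b). adj a b}. eventually (\<lambda>t. 0 < weight t (fst e) (snd e)) sequentially"
  proof (clarify)
    fix i j assume ij: "adj i j"
    have i: "i \<in> I" using adj_in ij by auto
    have lim: "(\<lambda>t. weight t i j) \<longlonglongrightarrow> mu i * (denom W_lim i j * phi i - Q i j * phi j)"
      unfolding weight_def by (intro tendsto_intros tendsto_denom W_lim(1))
    have "denom W_lim i j * phi i - Q i j * phi j = denom W_lim i j * (phi i - W_lim i j * phi j)"
      using W_lim_mult_denom[OF ij] by (simp add: algebra_simps)
    then have "0 < mu i * (denom W_lim i j * phi i - Q i j * phi j)"
      using denom_W_lim_pos[OF ij] V_lim_defect_pos[OF ij] W_lim_eq_V_lim[OF ij] mu_pos[OF i] by simp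
    then show "eventually (\<lambda>t. 0 < weight t (fst (i, j)) (snd (i, j))) sequentially"
      using order_tendstoD(1)[OF lim] by simp
  qed
  from eventually_ball_finite[OF finite_edges this] show ?thesis
    by (auto simp: eventually_sequentially)
qed

definition rate :: real where
  "rate = 1 - Min ((\<lambda>i. mu i * slack i) ` I) / (\<Sum>i\<in>I. mu i * phi i)"

lemma rate_bounds:
  assumes "I \<noteq> {}"
  shows "0 \<le> rate" "rate < 1"
    and "adj a b \<Longrightarrow> weight (Suc t) a b - mu a * slack a \<le> rate * weight (Suc t) a b"
proof -
  define m where "m = Min ((\<lambda>i. mu i * slack i) ` I)"
  define B where "B = (\<Sum>i\<in>I. mu i * phi i)"
  have B_ge: "mu i * phi i \<le> B" if "i \<in> I" for i
    unfolding B_def using that finite_I mu_pos phi_ge_1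
    by (intro member_le_sum) (auto intro: mult_nonneg_nonneg less_imp_le order.trans[OF zero_le_one])
  have m_le: "m \<le> mu i * slack i" if "i \<in> I" for i
    unfolding m_def using finite_I that by auto
  have "0 < m" unfolding m_def using finite_I assms mu_pos slack_pos by (subst Min_gr_iff) auto
  obtain i where i: "i \<in> I" using assms by auto
  have "0 \<le> (\<Sum>k\<in>I. Q i k * phi k)"
    by (rule sum_nonneg) (metis i Q_nonneg phi_ge_1 mult_nonneg_nonneg order.trans zero_le_one)
  then have "slack i \<le> phi i" by (simp add: slack_def)
  then have "m \<le> B" using m_le[OF i] B_ge[OF i] mu_pos[OF i]
    by (meson mult_left_mono less_imp_le order.trans)
  then show "0 \<le> rate" "rate < 1" using \<open>0 < m\<close> by (auto simp: rate_def m_def[symmetric] B_def[symmetric])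
  assume ab: "adj a b"
  then have a: "a \<in> I" using adj_in by auto
  have "(m / B) * weight (Suc t) a b \<le> (m / B) * B"
    using weight_le[OF ab, of "Suc t"] B_ge[OF a] \<open>0 < m\<close> \<open>m \<le> B\<close> by (intro mult_left_mono) auto
  then have "(m / B) * weight (Suc t) a b \<le> mu a * slack a" using \<open>0 < m\<close> \<open>m \<le> B\<close> m_le[OF a] by simp
  then show "weight (Suc t) a b - mu a * slack a \<le> rate * weight (Suc t) a b"
    by (simp add: rate_def m_def[symmetric] B_def[symmetric] algebra_simps)
qed

lemma H_ge_1: "1 \<le> H t i j"
proof (induction t arbitrary: i j)
  case (Suc t)
  have "0 \<le> (\<Sum>k\<in>N i - {j}. W t k i * H t k i)"
    by (rule sum_nonneg) (metis in_nbrs_minus_adj W_bounds Suc.IH less_imp_le mult_nonneg_nonneg order.trans zero_le_one)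
  then show ?case by (simp add: H_Suc)
qed (simp add: H_0)

lemma H_increment_le:
  "H (Suc (Suc t)) i j - H (Suc t) i j
     \<le> (\<Sum>k\<in>N i - {j}. W (Suc t) k i * (H (Suc t) k i - H t k i))"
proof -
  have "(\<Sum>k\<in>N i - {j}. W (Suc t) k i * H t k i) \<le> (\<Sum>k\<in>N i - {j}. W t k i * H t k i)"
    by (rule sum_mono) (metis in_nbrs_minus_adj W_Suc_le H_ge_1 mult_right_mono order.trans zero_le_one)
  then show ?thesis
    by (simp only: H_Suc[of "Suc t"] H_Suc[of t] right_diff_distrib sum_subtractf)
qed

lemma H_increment_le_geometric:
  assumes "I \<noteq> {}" and "0 \<le> c"
    and start: "\<And>a b. adj a b \<Longrightarrow> H (Suc t0) a b - H t0 a b \<le> c * weight t0 a b"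
  shows "adj a b \<Longrightarrow> H (Suc (t0 + n)) a b - H (t0 + n) a b \<le> c * rate ^ n * weight (t0 + n) a b"
proof (induction n arbitrary: a b)
  case 0 then show ?case using start by simp
next
  case (Suc n)
  have cg: "0 \<le> c * rate ^ n" using \<open>0 \<le> c\<close> rate_bounds[OF assms(1)] by simp
  have "H (Suc (t0 + Suc n)) a b - H (t0 + Suc n) a b
      \<le> (\<Sum>k\<in>N a - {b}. W (Suc (t0 + n)) k a * (H (Suc (t0 + n)) k a - H (t0 + n) k a))"
    using H_increment_le[of "t0 + n" a b] by simp
  also have "\<dots> \<le> (\<Sum>k\<in>N a - {b}. W (Suc (t0 + n)) k a * (c * rate ^ n * weight (t0 + n) k a))"
    by (rule sum_mono) (metis in_nbrs_minus_adj Suc.IH W_bounds less_imp_le mult_left_mono)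
  also have "\<dots> = c * rate ^ n * (weight (Suc (t0 + n)) a b - mu a * slack a)"
    using weight_Suc[OF Suc.prems, of "t0 + n"] by (simp add: sum_distrib_left ac_simps)
  also have "\<dots> \<le> c * rate ^ n * (rate * weight (Suc (t0 + n)) a b)"
    using rate_bounds(3)[OF assms(1) Suc.prems] cg by (intro mult_left_mono) auto
  finally show ?case by (simp add: algebra_simps)
qed

lemma convergent_H:
  assumes "adj i j"
  shows "convergent (\<lambda>t. H t i j)"
proof -
  have I: "I \<noteq> {}" using adj_in assms by auto
  obtain t0 where t0: "\<And>a b. adj a b \<Longrightarrow> 0 < weight t0 a b" using weight_eventually_pos by blast
  define incr where "incr a b = \<bar>H (Suc t0) a b - H t0 a b\<bar> / weight t0 a b" for a b
  define c where "c = (\<Sum>e\<in>{(a, b). adj a b}. incr (fst e) (snd e))"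
  have incr_nonneg: "0 \<le> incr a b" if "adj a b" for a b
    using t0[OF that] by (simp add: incr_def)
  have incr_le: "incr a b \<le> c" if "adj a b" for a b
  proof -
    have "(\<lambda>e. incr (fst e) (snd e)) (a, b) \<le> (\<Sum>e\<in>{(a, b). adj a b}. incr (fst e) (snd e))"
      by (rule member_le_sum) (use that finite_edges incr_nonneg in auto)
    then show ?thesis by (simp add: c_def)
  qed
  have "0 \<le> c" using incr_nonneg[OF assms] incr_le[OF assms] by linarith
  have "H (Suc t0) a b - H t0 a b \<le> c * weight t0 a b" if "adj a b" for a b
    using incr_le[OF that] t0[OF that] abs_ge_self[of "H (Suc t0) a b - H t0 a b"]
    by (simp add: incr_def pos_divide_le_eq)
  note geometric = H_increment_le_geometric[OF I \<open>0 \<le> c\<close> this assms]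
  define B where "B = mu i * phi i"
  have "0 < B" using mu_pos[of i] phi_ge_1[of i] adj_in[OF assms] by (auto simp: B_def intro!: mult_pos_pos)
  have "H (Suc (n + t0)) i j - H (n + t0) i j \<le> c * B * rate ^ n" for n
  proof -
    have "c * rate ^ n * weight (t0 + n) i j \<le> c * rate ^ n * B"
      using weight_le[OF assms] \<open>0 \<le> c\<close> rate_bounds(1)[OF I] by (intro mult_left_mono) (simp_all add: B_def)
    then show ?thesis using geometric[of n] by (simp add: add.commute mult_ac)
  qed
  then have "convergent (\<lambda>n. H (n + t0) i j)"
    using rate_bounds(1,2)[OF I] \<open>0 \<le> c\<close> \<open>0 < B\<close> H_ge_1
    by (intro convergent_if_increments_le_geometric[where c = "c * B" and g = rate and b = 1]) auto
  then show ?thesis using convergent_ignore_initial_segment[of "\<lambda>t. H t i j" t0] by simp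
qed

lemma convergent_W: "adj i j \<Longrightarrow> convergent (\<lambda>t. W t i j)"
  using W_lim(1) convergent_def by blast

lemma convergent_node_H: "convergent (\<lambda>t. mpa_node_H I adj Q q t l)"
proof -
  have "convergent (\<lambda>t. W t i l * H t i l)" if "i \<in> N l" for i
    using that nbrs_iff adj_sym convergent_W convergent_H convergent_mult by blast
  then have "convergent (\<lambda>t. \<Sum>i\<in>N l. W t i l * H t i l)" by (intro convergent_sum) auto
  then show ?thesis unfolding mpa_node_H_def using convergent_add convergent_const by blast
qed

end

lemma reversible_if_symmetric_conductances:
  fixes C :: "'a \<Rightarrow> 'a \<Rightarrow> real"
  assumes C_sym: "\<forall>i\<in>insert ff I. \<forall>j\<in>insert ff I. C i j = C j i"
    and C_nonneg: "\<forall>i\<in>insert ff I. \<forall>j\<in>insert ff I. C i j \<ge> 0"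
    and Q_C: "\<forall>i\<in>I. \<forall>j\<in>I. Q i j = C i j / (\<Sum>k\<in>insert ff I. C i k)"
    and q_C: "\<forall>i\<in>I. q i = C i ff / (\<Sum>k\<in>insert ff I. C i k)"
    and rows: "\<forall>i\<in>I. (\<Sum>j\<in>I. Q i j) + q i = 1"
  shows "\<exists>mu. (\<forall>i\<in>I. 0 < mu i) \<and> (\<forall>i\<in>I. \<forall>k\<in>I. mu i * Q i k = mu k * Q k i)"
proof -
  define mu where "mu i = (\<Sum>k\<in>insert ff I. C i k)" for i
  have mu_pos: "0 < mu i" if i: "i \<in> I" for i
  proof -
    have "0 \<le> mu i" unfolding mu_def using C_nonneg i by (intro sum_nonneg) auto
    moreover have "mu i \<noteq> 0"
      using Q_C q_C rows i by (auto simp: mu_def)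
    ultimately show ?thesis by simp
  qed
  have "mu i * Q i k = C i k" if "i \<in> I" "k \<in> I" for i k
    using Q_C that mu_pos[OF that(1)] by (simp add: mu_def)
  then show ?thesis using C_sym mu_pos by (intro exI[of _ mu]) auto
qed

theorem theorem1:
  fixes I :: "'a set" and adj :: "'a \<Rightarrow> 'a \<Rightarrow> bool" and ff :: 'a
    and Q :: "'a \<Rightarrow> 'a \<Rightarrow> real" and q :: "'a \<Rightarrow> real" and C :: "'a \<Rightarrow> 'a \<Rightarrow> real"
  assumes finI: "finite I"
    and adj_in: "\<And>i j. adj i j \<Longrightarrow> i \<in> I \<and> j \<in> I"
    and adj_sym: "\<And>i j. adj i j \<Longrightarrow> adj j i"
    and adj_irrefl: "\<And>i. \<not> adj i i"
    and connected: "\<forall>i\<in>I. \<forall>j\<in>I. adj\<^sup>*\<^sup>* i j"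
    and ff_notin: "ff \<notin> I"
    and Q_nonneg: "\<forall>i\<in>I. \<forall>j\<in>I. Q i j \<ge> 0"
    and q_nonneg: "\<forall>i\<in>I. q i \<ge> 0"
    and Q_zero: "\<forall>i\<in>I. \<forall>j\<in>I. Q i j = 0 \<longleftrightarrow> \<not> adj i j"
    and rows: "\<forall>i\<in>I. (\<Sum>j\<in>I. Q i j) + q i = 1"
    and q_nz: "\<exists>i\<in>I. q i \<noteq> 0"
    and substoch: "\<forall>l\<in>I. strictly_substochastic Q (I - {l})"
    and C_sym: "\<forall>i\<in>insert ff I. \<forall>j\<in>insert ff I. C i j = C j i"
    and C_nonneg: "\<forall>i\<in>insert ff I. \<forall>j\<in>insert ff I. C i j \<ge> 0"
    and Q_C: "\<forall>i\<in>I. \<forall>j\<in>I. Q i j = C i j / (\<Sum>k\<in>insert ff I. C i k)"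
    and q_C: "\<forall>i\<in>I. q i = C i ff / (\<Sum>k\<in>insert ff I. C i k)"
  shows "(\<forall>i\<in>I. \<forall>j\<in>I. adj i j \<longrightarrow>
            convergent (\<lambda>t. mpaW I adj Q q t i j) \<and> convergent (\<lambda>t. mpaH I adj Q q t i j))
       \<and> (\<forall>l\<in>I. convergent (\<lambda>t. mpa_node_H I adj Q q t l))"
proof -
  have Q_pos: "0 < Q i j" if "adj i j" for i j
    using that adj_in Q_nonneg Q_zero by (metis order.not_eq_order_implies_strict)
  obtain phi where phi: "\<forall>i\<in>I. 1 \<le> phi i \<and> (\<Sum>k\<in>I. Q i k * phi k) < phi i"
    using exists_strictly_superharmonic[of I adj Q q] finI adj_in Q_nonneg Q_pos q_nonneg rows
      connected q_nz by blast
  obtain mu where mu: "\<forall>i\<in>I. 0 < mu i" "\<forall>i\<in>I. \<forall>k\<in>I. mu i * Q i k = mu k * Q k i"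
    using reversible_if_symmetric_conductances[OF C_sym C_nonneg Q_C q_C rows] by blast
  interpret mpa_reversible I adj Q q mu phi
    by unfold_locales (use finI adj_in adj_sym Q_nonneg q_nonneg Q_zero rows mu phi in auto)
  show ?thesis using convergent_W convergent_H convergent_node_H by blast
qed

end
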